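(* Suppose $X^*\in\operatorname{relint}\mathcal X$ (each $X_i^*$ positive definite) is consistently asymptotically stable under the flow $\Phi$. Then for every sufficiently small compact neighborhood $U$ of $X^*$ in $\operatorname{relint}\mathcal X$, $$\lim_{t\to\infty}\sup_{X\in U}\|\Phi_t(X)-X^*\|=0.$$
   Context: Quantum game with players $i\in\{1,\dots,N\}$; $\mathbb H^{d}$ is the real vector space of $d\times d$ complex Hermitian matrices; $\mathcal X_i=\{X_i\in\mathbb H^{d_i}:X_i\succeq0,\operatorname{tr}X_i=1\}$, $\mathcal X=\prod_i\mathcal X_i$, with any norm $\|\cdot\|$. Payoffs $u_i(X)=\sum_{\omega\in\Omega}U_i(\omega)\operatorname{tr}[P_\omega(X_1\otimes\cdots\otimes X_N)]$; payoff gradient $V_i(X)\in\mathbb H^{d_i}$ with $u_i(A;X_{-i})=\operatorname{tr}(AV_i(X))$. Regularizers $h_i(X_i)=\operatorname{tr}\theta_i(X_i)$ with $\theta_i:[0,1]\to\mathbb R$ continuous, twice differentiable on $(0,1]$, $\theta_i(0)=0$, $\inf_{(0,1]}\theta_i''>0$, and steep ($\lim_{x\to0^+}\theta_i'(x)=-\infty$). Mirror map $Q_i(Y_i)=\arg\max_{X_i\in\mathcal X_i}\{\operatorname{tr}(Y_iX_i)-h_i(X_i)\}$. FTQL dynamics $\dot Y_i=V_i(X)$, $X_i=Q_i(Y_i)$. Standing assumption: the dynamics induce a continuous flow $\Phi:\mathbb R_{\ge0}\times\mathcal X\to\mathcal X$ with $\Phi_t(Q(Y))=Q(Y(t))$ for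 each FTQL solution with $Y(0)=Y$ (and, outside the image of $Q$, given by the dynamics restricted to the relevant face of $\mathcal X$). $X^*$ is Lyapunov stable if for every neighborhood $U$ of $X^*$ in $\mathcal X$ there is a neighborhood $U'$ with $\Phi_t(U')\subseteq U$ for all $t\ge0$. Domain of consistency of $P\in\mathcal X$: $\mathcal X_P=\{X\in\mathcal X:\ker X_i\subseteq\ker P_i\ \forall i\}$. $P$ is consistently attracting if there is a neighborhood $U$ of $P$ with $\Phi_t(X)\to P$ for all $X\in U\cap\mathcal X_P$; consistently asymptotically stable if Lyapunov stable and consistently attracting. *)

theory Defs
  imports "Jordan_Normal_Form.Schur_Decomposition" "Jordan_Normal_Form.Matrix_Kernel"
begin

definition hermitian :: "nat \<Rightarrow> complex mat \<Rightarrow> bool" where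
  "hermitian n A \<longleftrightarrow> A \<in> carrier_mat n n \<and> mat_adjoint A = A"

definition quad_form :: "complex mat \<Rightarrow> complex vec \<Rightarrow> complex" where
  "quad_form A v = (\<Sum>i<dim_vec v. \<Sum>j<dim_vec v. cnj (v $ i) * A $$ (i, j) * v $ j)"

definition psd :: "nat \<Rightarrow> complex mat \<Rightarrow> bool" where
  "psd n A \<longleftrightarrow> hermitian n A \<and> (\<forall>v \<in> carrier_vec n. 0 \<le> Re (quad_form A v))"

definition pos_def :: "nat \<Rightarrow> complex mat \<Rightarrow> bool" where
  "pos_def n A \<longleftrightarrow> hermitian n A \<and> (\<forall>v \<in> carrier_vec n. v \<noteq> 0\<^sub>v n \<longrightarrow> 0 < Re (quad_form A v))"

definition mtrace :: "complex mat \<Rightarrow> complex" where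
  "mtrace A = (\<Sum>i<dim_row A. A $$ (i, i))"

definition kron :: "complex mat \<Rightarrow> complex mat \<Rightarrow> complex mat" where
  "kron A B = mat (dim_row A * dim_row B) (dim_col A * dim_col B)
      (\<lambda>(i, j). A $$ (i div dim_row B, j div dim_col B) * B $$ (i mod dim_row B, j mod dim_col B))"

definition spectraplex :: "nat \<Rightarrow> complex mat set" where
  "spectraplex n = {A. psd n A \<and> mtrace A = 1}"

(* tr theta(A) for Hermitian A: sum of theta over the eigenvalues (with multiplicity) *)
definition trace_fun :: "(real \<Rightarrow> real) \<Rightarrow> nat \<Rightarrow> complex mat \<Rightarrow> real" where
  "trace_fun \<theta> n A = (THE s. \<exists>lams :: real list. length lams = n \<and>
      char_poly A = prod_list (map (\<lambda>l. [:- complex_of_real l, 1:]) lams) \<and>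
      s = sum_list (map \<theta> lams))"

type_synonym profile = "nat \<Rightarrow> complex mat"

definition profiles :: "nat \<Rightarrow> (nat \<Rightarrow> nat) \<Rightarrow> profile set" where
  "profiles N d = {X. (\<forall>i<N. X i \<in> spectraplex (d i)) \<and> (\<forall>i\<ge>N. X i = 0\<^sub>m 0 0)}"

definition relint_profiles :: "nat \<Rightarrow> (nat \<Rightarrow> nat) \<Rightarrow> profile set" where
  "relint_profiles N d = {X \<in> profiles N d. \<forall>i<N. pos_def (d i) (X i)}"

(* Frobenius-type distance on profiles (all norms on the finite-dim. space are equivalent) *)
definition pdist :: "nat \<Rightarrow> (nat \<Rightarrow> nat) \<Rightarrow> profile \<Rightarrow> profile \<Rightarrow> real" where
  "pdist N d X Y = sqrt (\<Sum>i<N. \<Sum>j<d i. \<Sum>k<d i. (cmod (X i $$ (j, k) - Y i $$ (j, k)))\<^sup>2)"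

definition pnhd :: "nat \<Rightarrow> (nat \<Rightarrow> nat) \<Rightarrow> profile set \<Rightarrow> profile \<Rightarrow> bool" where
  "pnhd N d U P \<longleftrightarrow> U \<subseteq> profiles N d \<and>
      (\<exists>e>0. {X \<in> profiles N d. pdist N d X P < e} \<subseteq> U)"

definition pcompact :: "nat \<Rightarrow> (nat \<Rightarrow> nat) \<Rightarrow> profile set \<Rightarrow> bool" where
  "pcompact N d U \<longleftrightarrow> (\<forall>s :: nat \<Rightarrow> profile. (\<forall>n. s n \<in> U) \<longrightarrow>
      (\<exists>r l. strict_mono r \<and> l \<in> U \<and> ((\<lambda>n. pdist N d (s (r n)) l) \<longlonglongrightarrow> 0)))"

definition tensor_profile :: "nat \<Rightarrow> profile \<Rightarrow> complex mat" where
  "tensor_profile N X = foldl kron (1\<^sub>m 1) (map X [0..<N])"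

definition payoff :: "nat \<Rightarrow> 'w set \<Rightarrow> ('w \<Rightarrow> complex mat) \<Rightarrow> (nat \<Rightarrow> 'w \<Rightarrow> real)
      \<Rightarrow> nat \<Rightarrow> profile \<Rightarrow> real" where
  "payoff N \<Omega> P U i X = (\<Sum>w\<in>\<Omega>. U i w * Re (mtrace (P w * tensor_profile N X)))"

definition povm :: "nat \<Rightarrow> (nat \<Rightarrow> nat) \<Rightarrow> 'w set \<Rightarrow> ('w \<Rightarrow> complex mat) \<Rightarrow> bool" where
  "povm N d \<Omega> P \<longleftrightarrow> finite \<Omega> \<and> (\<forall>w\<in>\<Omega>. psd (\<Prod>i<N. d i) (P w)) \<and>
      (\<forall>j<(\<Prod>i<N. d i). \<forall>k<(\<Prod>i<N. d i).
         (\<Sum>w\<in>\<Omega>. P w $$ (j, k)) = (if j = k then 1 else 0))"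

definition payoff_grad :: "nat \<Rightarrow> (nat \<Rightarrow> nat) \<Rightarrow> 'w set \<Rightarrow> ('w \<Rightarrow> complex mat)
      \<Rightarrow> (nat \<Rightarrow> 'w \<Rightarrow> real) \<Rightarrow> nat \<Rightarrow> profile \<Rightarrow> complex mat" where
  "payoff_grad N d \<Omega> P U i X = (THE V. hermitian (d i) V \<and>
      (\<forall>A. hermitian (d i) A \<longrightarrow> payoff N \<Omega> P U i (X(i := A)) = Re (mtrace (A * V))))"

definition admissible_theta :: "(real \<Rightarrow> real) \<Rightarrow> bool" where
  "admissible_theta \<theta> \<longleftrightarrow> continuous_on {0..1} \<theta> \<and> \<theta> 0 = 0 \<and>
     (\<exists>\<theta>' \<theta>''. (\<forall>x\<in>{0<..1}. (\<theta> has_real_derivative \<theta>' x) (at x within {0<..1})) \<and>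
              (\<forall>x\<in>{0<..1}. (\<theta>' has_real_derivative \<theta>'' x) (at x within {0<..1})) \<and>
              (\<exists>c>0. \<forall>x\<in>{0<..1}. c \<le> \<theta>'' x) \<and>
              filterlim \<theta>' at_bot (at_right 0))"

definition mirror :: "(real \<Rightarrow> real) \<Rightarrow> nat \<Rightarrow> complex mat \<Rightarrow> complex mat" where
  "mirror \<theta> n Y = (THE X. X \<in> spectraplex n \<and>
      (\<forall>Z \<in> spectraplex n. Re (mtrace (Y * Z)) - trace_fun \<theta> n Z
                           \<le> Re (mtrace (Y * X)) - trace_fun \<theta> n X))"

definition mirror_profile :: "nat \<Rightarrow> (nat \<Rightarrow> nat) \<Rightarrow> (nat \<Rightarrow> real \<Rightarrow> real) \<Rightarrow> profile \<Rightarrow> profile" where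
  "mirror_profile N d \<theta> Y = (\<lambda>i. if i < N then mirror (\<theta> i) (d i) (Y i) else 0\<^sub>m 0 0)"

definition ftql_solution :: "nat \<Rightarrow> (nat \<Rightarrow> nat) \<Rightarrow> 'w set \<Rightarrow> ('w \<Rightarrow> complex mat)
      \<Rightarrow> (nat \<Rightarrow> 'w \<Rightarrow> real) \<Rightarrow> (nat \<Rightarrow> real \<Rightarrow> real) \<Rightarrow> (real \<Rightarrow> profile) \<Rightarrow> bool" where
  "ftql_solution N d \<Omega> P U \<theta> Y \<longleftrightarrow>
     (\<forall>t\<ge>0. \<forall>i<N. hermitian (d i) (Y t i)) \<and>
     (\<forall>t\<ge>0. \<forall>i<N. \<forall>j<d i. \<forall>k<d i.
        ((\<lambda>s. Y s i $$ (j, k)) has_vector_derivative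
            (payoff_grad N d \<Omega> P U i (mirror_profile N d \<theta> (Y t)) $$ (j, k))) (at t within {0..}))"

definition lyapunov_stable :: "nat \<Rightarrow> (nat \<Rightarrow> nat) \<Rightarrow> (real \<Rightarrow> profile \<Rightarrow> profile) \<Rightarrow> profile \<Rightarrow> bool" where
  "lyapunov_stable N d \<Phi> Xs \<longleftrightarrow> (\<forall>U. pnhd N d U Xs \<longrightarrow>
      (\<exists>U'. pnhd N d U' Xs \<and> (\<forall>t\<ge>0. \<Phi> t ` U' \<subseteq> U)))"

definition consistency_domain :: "nat \<Rightarrow> (nat \<Rightarrow> nat) \<Rightarrow> profile \<Rightarrow> profile set" where
  "consistency_domain N d Q = {X \<in> profiles N d. \<forall>i<N. mat_kernel (X i) \<subseteq> mat_kernel (Q i)}"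

definition consistently_attracting :: "nat \<Rightarrow> (nat \<Rightarrow> nat) \<Rightarrow> (real \<Rightarrow> profile \<Rightarrow> profile) \<Rightarrow> profile \<Rightarrow> bool" where
  "consistently_attracting N d \<Phi> Q \<longleftrightarrow> (\<exists>U. pnhd N d U Q \<and>
      (\<forall>X \<in> U \<inter> consistency_domain N d Q. ((\<lambda>t. pdist N d (\<Phi> t X) Q) \<longlongrightarrow> 0) at_top))"

definition consistently_asymp_stable :: "nat \<Rightarrow> (nat \<Rightarrow> nat) \<Rightarrow> (real \<Rightarrow> profile \<Rightarrow> profile) \<Rightarrow> profile \<Rightarrow> bool" where
  "consistently_asymp_stable N d \<Phi> Q \<longleftrightarrow> lyapunov_stable N d \<Phi> Q \<and> consistently_attracting N d \<Phi> Q"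

definition ftql_flow :: "nat \<Rightarrow> (nat \<Rightarrow> nat) \<Rightarrow> 'w set \<Rightarrow> ('w \<Rightarrow> complex mat)
      \<Rightarrow> (nat \<Rightarrow> 'w \<Rightarrow> real) \<Rightarrow> (nat \<Rightarrow> real \<Rightarrow> real) \<Rightarrow> (real \<Rightarrow> profile \<Rightarrow> profile) \<Rightarrow> bool" where
  "ftql_flow N d \<Omega> P U \<theta> \<Phi> \<longleftrightarrow>
     (\<forall>t\<ge>0. \<forall>X\<in>profiles N d. \<Phi> t X \<in> profiles N d) \<and>
     (\<forall>X\<in>profiles N d. \<Phi> 0 X = X) \<and>
     (\<forall>s\<ge>0. \<forall>t\<ge>0. \<forall>X\<in>profiles N d. \<Phi> (s + t) X = \<Phi> t (\<Phi> s X)) \<and>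
     (\<forall>t\<ge>0. \<forall>X\<in>profiles N d. \<forall>e>0. \<exists>\<delta>>0. \<forall>s\<ge>0. \<forall>Z\<in>profiles N d.
         \<bar>s - t\<bar> < \<delta> \<and> pdist N d Z X < \<delta> \<longrightarrow> pdist N d (\<Phi> s Z) (\<Phi> t X) < e) \<and>
     (\<forall>Y. ftql_solution N d \<Omega> P U \<theta> Y \<longrightarrow>
         (\<forall>t\<ge>0. \<Phi> t (mirror_profile N d \<theta> (Y 0)) = mirror_profile N d \<theta> (Y t)))"

end

theory Submission imports Defs "HOL-Analysis.L2_Norm" begin

text \<open>Every point of the compact set \<open>K\<close> lies in the basin of attraction, since positive
definite profiles are consistent with the positive definite \<open>Xs\<close>. Lyapunov stability and
continuity of the flow turn the convergence of one trajectory into a uniform entrance time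
for a whole neighbourhood of its starting point; compactness of \<open>K\<close> makes this time uniform
on \<open>K\<close>.\<close>

lemma pdist_eq_L2_set:
  "pdist N d X Y = L2_set (\<lambda>(i,j,k). cmod (X i $$ (j,k) - Y i $$ (j,k)))
     (SIGMA i:{..<N}. {..<d i} \<times> {..<d i})"
proof -
  have "(\<Sum>i<N. \<Sum>j<d i. \<Sum>k<d i. (cmod (X i $$ (j, k) - Y i $$ (j, k)))\<^sup>2)
     = (\<Sum>i<N. \<Sum>p\<in>{..<d i} \<times> {..<d i}. (\<lambda>(i,j,k). (cmod (X i $$ (j, k) - Y i $$ (j, k)))\<^sup>2) (i,p))"
    by (simp add: sum.cartesian_product case_prod_beta)
  also have "\<dots> = (\<Sum>q\<in>(SIGMA i:{..<N}. {..<d i} \<times> {..<d i}).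
                    (\<lambda>(i,j,k). (cmod (X i $$ (j, k) - Y i $$ (j, k)))\<^sup>2) q)"
    by (subst sum.Sigma) (auto simp: split_def)
  finally show ?thesis unfolding pdist_def L2_set_def by (simp add: case_prod_beta)
qed

lemma pdist_nonneg: "0 \<le> pdist N d X Y"
  unfolding pdist_def by (simp add: sum_nonneg)

lemma pdist_self [simp]: "pdist N d X X = 0"
  by (simp add: pdist_def)

lemma pdist_triangle: "pdist N d A C \<le> pdist N d A B + pdist N d B C"
proof -
  let ?S = "SIGMA i:{..<N}. {..<d i} \<times> {..<d i}"
  have "pdist N d A C \<le> L2_set (\<lambda>p. (\<lambda>(i,j,k). cmod (A i $$ (j,k) - B i $$ (j,k))) p
       + (\<lambda>(i,j,k). cmod (B i $$ (j,k) - C i $$ (j,k))) p) ?S"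
    unfolding pdist_eq_L2_set
    by (rule L2_set_mono) (auto simp: case_prod_beta intro: norm_diff_triangle_le)
  also have "\<dots> \<le> pdist N d A B + pdist N d B C"
    unfolding pdist_eq_L2_set by (rule L2_set_triangle_ineq)
  finally show ?thesis .
qed

lemma quad_form_eq_sum_mult_mat_vec:
  assumes "A \<in> carrier_mat n n" "v \<in> carrier_vec n"
  shows "quad_form A v = (\<Sum>i<n. cnj (v $ i) * (A *\<^sub>v v) $ i)"
  using assms unfolding quad_form_def
  by (auto simp: mult_mat_vec_def scalar_prod_def sum_distrib_left mult.assoc atLeast0LessThan
           intro!: sum.cong)

lemma pos_def_mat_kernel:
  assumes "pos_def n A"
  shows "mat_kernel A = {0\<^sub>v n}"
proof -
  have A: "A \<in> carrier_mat n n" using assms by (auto simp: pos_def_def hermitian_def)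
  have "v = 0\<^sub>v n" if v: "v \<in> mat_kernel A" for v
  proof -
    have vc: "v \<in> carrier_vec n" and "A *\<^sub>v v = 0\<^sub>v n" using v A by (auto simp: mat_kernel_def)
    then have "quad_form A v = 0" using quad_form_eq_sum_mult_mat_vec[OF A vc] by simp
    then show ?thesis using assms vc unfolding pos_def_def by force
  qed
  moreover have "0\<^sub>v n \<in> mat_kernel A" using A by (auto simp: mat_kernel_def)
  ultimately show ?thesis by blast
qed

lemma relint_profiles_subset_consistency_domain:
  assumes "Q \<in> relint_profiles N d"
  shows "relint_profiles N d \<subseteq> consistency_domain N d Q"
  using assms by (force simp: relint_profiles_def consistency_domain_def pos_def_mat_kernel)

lemma ftql_flow_uniform_near_convergent_orbit:
  assumes flow: "ftql_flow N d \<Omega> P U \<theta> \<Phi>"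
    and lyap: "lyapunov_stable N d \<Phi> Xs"
    and l: "l \<in> profiles N d"
    and conv: "((\<lambda>t. pdist N d (\<Phi> t l) Xs) \<longlongrightarrow> 0) at_top"
    and e: "e > 0"
  obtains T \<eta> where "\<eta> > 0"
    "\<And>Z t. Z \<in> profiles N d \<Longrightarrow> pdist N d Z l < \<eta> \<Longrightarrow> t \<ge> T \<Longrightarrow> pdist N d (\<Phi> t Z) Xs < e"
proof -
  have maps: "\<And>t X. t \<ge> 0 \<Longrightarrow> X \<in> profiles N d \<Longrightarrow> \<Phi> t X \<in> profiles N d"
   and semigroup: "\<And>s t X. s \<ge> 0 \<Longrightarrow> t \<ge> 0 \<Longrightarrow> X \<in> profiles N d \<Longrightarrow> \<Phi> (s + t) X = \<Phi> t (\<Phi> s X)"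
   and cont: "\<And>t X e. t \<ge> 0 \<Longrightarrow> X \<in> profiles N d \<Longrightarrow> e > 0 \<Longrightarrow> \<exists>\<delta>>0. \<forall>s\<ge>0. \<forall>Z\<in>profiles N d.
         \<bar>s - t\<bar> < \<delta> \<and> pdist N d Z X < \<delta> \<longrightarrow> pdist N d (\<Phi> s Z) (\<Phi> t X) < e"
    using flow unfolding ftql_flow_def by blast+
  define B where "B = {X \<in> profiles N d. pdist N d X Xs < e}"
  have "pnhd N d B Xs" unfolding pnhd_def B_def using e by auto
  then obtain U' where U': "pnhd N d U' Xs" "\<And>t. t \<ge> 0 \<Longrightarrow> \<Phi> t ` U' \<subseteq> B"
    using lyap unfolding lyapunov_stable_def by blast
  then obtain \<delta> where \<delta>: "\<delta> > 0" "{X \<in> profiles N d. pdist N d X Xs < \<delta>} \<subseteq> U'"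
    unfolding pnhd_def by blast
  have "eventually (\<lambda>t. pdist N d (\<Phi> t l) Xs < \<delta>/2) at_top"
    using order_tendstoD(2)[OF conv, of "\<delta>/2"] \<delta>(1) by simp
  then obtain T0 where T0: "\<And>t. t \<ge> T0 \<Longrightarrow> pdist N d (\<Phi> t l) Xs < \<delta>/2"
    unfolding eventually_at_top_linorder by blast
  define T where "T = max T0 0"
  have T: "T \<ge> 0" "pdist N d (\<Phi> T l) Xs < \<delta>/2" using T0 unfolding T_def by auto
  obtain \<eta> where \<eta>: "\<eta> > 0"
    "\<And>Z. Z \<in> profiles N d \<Longrightarrow> pdist N d Z l < \<eta> \<Longrightarrow> pdist N d (\<Phi> T Z) (\<Phi> T l) < \<delta>/2"
    using cont[OF T(1) l, of "\<delta>/2"] \<delta>(1) T(1) by auto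
  show thesis
  proof (rule that[OF \<eta>(1)])
    fix Z t assume Z: "Z \<in> profiles N d" "pdist N d Z l < \<eta>" and t: "t \<ge> T"
    have "pdist N d (\<Phi> T Z) Xs < \<delta>"
      using \<eta>(2)[OF Z] T(2) pdist_triangle[of N d "\<Phi> T Z" Xs "\<Phi> T l"] by linarith
    then have "\<Phi> T Z \<in> U'" using \<delta>(2) maps[OF T(1) Z(1)] by auto
    moreover have "\<Phi> (t - T) ` U' \<subseteq> B" using U'(2) t by simp
    ultimately have "\<Phi> (t - T) (\<Phi> T Z) \<in> B" by blast
    moreover have "\<Phi> t Z = \<Phi> (t - T) (\<Phi> T Z)"
      using semigroup[OF T(1), of "t - T" Z] t Z(1) by simp
    ultimately show "pdist N d (\<Phi> t Z) Xs < e" by (simp add: B_def)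
  qed
qed

lemma pcompact_eventually_uniform:
  fixes Q :: "real \<Rightarrow> profile \<Rightarrow> bool"
  assumes K: "pcompact N d K"
    and local: "\<And>l. l \<in> K \<Longrightarrow> \<exists>T \<eta>. \<eta> > 0 \<and>
                  (\<forall>Z\<in>K. pdist N d Z l < \<eta> \<longrightarrow> (\<forall>t\<ge>T. Q t Z))"
  shows "\<exists>T. \<forall>t\<ge>T. \<forall>Z\<in>K. Q t Z"
proof (rule ccontr)
  assume "\<not> ?thesis"
  then have "\<forall>n::nat. \<exists>t. t \<ge> real n \<and> (\<exists>Z. Z \<in> K \<and> \<not> Q t Z)"
    by (meson linorder_not_le)
  then obtain t where "\<forall>n. t n \<ge> real n \<and> (\<exists>Z. Z \<in> K \<and> \<not> Q (t n) Z)"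
    by metis
  then obtain Z where tZ: "\<And>n. t n \<ge> real n" "\<And>n. Z n \<in> K" "\<And>n. \<not> Q (t n) (Z n)"
    by metis
  have "\<forall>n. Z n \<in> K" using tZ(2) by blast
  with K obtain r l where rl: "strict_mono r" "l \<in> K" "(\<lambda>n. pdist N d (Z (r n)) l) \<longlonglongrightarrow> 0"
    unfolding pcompact_def by blast
  obtain T \<eta> where \<eta>: "\<eta> > 0" "\<And>Z' t'. Z' \<in> K \<Longrightarrow> pdist N d Z' l < \<eta> \<Longrightarrow> t' \<ge> T \<Longrightarrow> Q t' Z'"
    using local[OF rl(2)] by blast
  have "eventually (\<lambda>n. pdist N d (Z (r n)) l < \<eta>) sequentially"
    using order_tendstoD(2)[OF rl(3), of \<eta>] \<eta>(1) by simp
  then obtain n0 where n0: "\<And>n. n \<ge> n0 \<Longrightarrow> pdist N d (Z (r n)) l < \<eta>"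
    unfolding eventually_sequentially by blast
  obtain n1 :: nat where n1: "real n1 \<ge> T" using real_arch_simple by blast
  define n where "n = max n0 n1"
  have "t (r n) \<ge> T"
    using tZ(1)[of "r n"] seq_suble[OF rl(1), of n] n1 by (simp add: n_def)
  moreover have "n \<ge> n0" by (simp add: n_def)
  ultimately show False using \<eta>(2)[OF tZ(2) n0] tZ(3) by blast
qed

lemma tendsto_SUP_zero_if_eventually_uniform:
  fixes f :: "real \<Rightarrow> 'a \<Rightarrow> real"
  assumes "K \<noteq> {}" "\<And>t X. 0 \<le> f t X"
    and unif: "\<And>e. e > 0 \<Longrightarrow> \<exists>T. \<forall>t\<ge>T. \<forall>X\<in>K. f t X < e"
  shows "((\<lambda>t. SUP X\<in>K. f t X) \<longlongrightarrow> 0) at_top"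
proof (rule tendstoI)
  fix e :: real assume e: "e > 0"
  then obtain T where T: "\<And>t X. t \<ge> T \<Longrightarrow> X \<in> K \<Longrightarrow> f t X < e/2"
    using unif[of "e/2"] by auto
  obtain X0 where X0: "X0 \<in> K" using assms(1) by blast
  have "dist (SUP X\<in>K. f t X) 0 < e" if t: "t \<ge> T" for t
  proof -
    have bdd: "bdd_above (f t ` K)" using T t by (intro bdd_aboveI2[of _ _ "e/2"]) (auto intro: less_imp_le)
    have "(SUP X\<in>K. f t X) \<le> e/2"
      using T t assms(1) by (intro cSUP_least) (auto intro: less_imp_le)
    moreover have "0 \<le> (SUP X\<in>K. f t X)"
      using cSUP_upper2[OF bdd X0] assms(2) by blast
    ultimately show ?thesis using e by simp
  qed
  then show "eventually (\<lambda>t. dist (SUP X\<in>K. f t X) 0 < e) at_top"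
    unfolding eventually_at_top_linorder by blast
qed

lemma ftql_flow_uniform_convergence_on_pcompact:
  assumes flow: "ftql_flow N d \<Omega> P U \<theta> \<Phi>"
    and lyap: "lyapunov_stable N d \<Phi> Xs"
    and K: "pcompact N d K" "K \<subseteq> profiles N d"
    and conv: "\<And>l. l \<in> K \<Longrightarrow> ((\<lambda>t. pdist N d (\<Phi> t l) Xs) \<longlongrightarrow> 0) at_top"
    and e: "e > 0"
  shows "\<exists>T. \<forall>t\<ge>T. \<forall>X\<in>K. pdist N d (\<Phi> t X) Xs < e"
proof (rule pcompact_eventually_uniform[OF K(1)])
  fix l assume l: "l \<in> K"
  obtain T \<eta> where "\<eta> > 0"
    "\<And>Z t. Z \<in> profiles N d \<Longrightarrow> pdist N d Z l < \<eta> \<Longrightarrow> t \<ge> T \<Longrightarrow> pdist N d (\<Phi> t Z) Xs < e"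
    using ftql_flow_uniform_near_convergent_orbit[OF flow lyap _ conv[OF l] e] l K(2)
    by (metis subsetD)
  with K(2) show "\<exists>T \<eta>. \<eta> > 0 \<and>
      (\<forall>Z\<in>K. pdist N d Z l < \<eta> \<longrightarrow> (\<forall>t\<ge>T. pdist N d (\<Phi> t Z) Xs < e))"
    by (meson subsetD)
qed

theorem lemmaD2:
  fixes N :: nat and d :: "nat \<Rightarrow> nat" and \<Omega> :: "'w set" and P :: "'w \<Rightarrow> complex mat"
    and U :: "nat \<Rightarrow> 'w \<Rightarrow> real" and \<theta> :: "nat \<Rightarrow> real \<Rightarrow> real"
    and \<Phi> :: "real \<Rightarrow> profile \<Rightarrow> profile" and Xs :: profile
  assumes dims: "\<forall>i<N. 1 \<le> d i"
    and povm: "povm N d \<Omega> P"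
    and reg: "\<forall>i<N. admissible_theta (\<theta> i)"
    and flow: "ftql_flow N d \<Omega> P U \<theta> \<Phi>"
    and interior: "Xs \<in> relint_profiles N d"
    and stable: "consistently_asymp_stable N d \<Phi> Xs"
  shows "\<exists>r>0. \<forall>K. K \<subseteq> relint_profiles N d \<and> pcompact N d K \<and> pnhd N d K Xs \<and>
            (\<forall>X\<in>K. pdist N d X Xs < r) \<longrightarrow>
            ((\<lambda>t. SUP X\<in>K. pdist N d (\<Phi> t X) Xs) \<longlongrightarrow> 0) at_top"
proof -
  obtain Ua where Ua: "pnhd N d Ua Xs"
    "\<And>X. X \<in> Ua \<inter> consistency_domain N d Xs \<Longrightarrow> ((\<lambda>t. pdist N d (\<Phi> t X) Xs) \<longlongrightarrow> 0) at_top"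
    using stable unfolding consistently_asymp_stable_def consistently_attracting_def by blast
  then obtain r where r: "r > 0" "{X \<in> profiles N d. pdist N d X Xs < r} \<subseteq> Ua"
    unfolding pnhd_def by blast
  have lyap: "lyapunov_stable N d \<Phi> Xs"
    using stable unfolding consistently_asymp_stable_def by blast
  have "((\<lambda>t. SUP X\<in>K. pdist N d (\<Phi> t X) Xs) \<longlongrightarrow> 0) at_top"
    if K: "K \<subseteq> relint_profiles N d" "pcompact N d K" "pnhd N d K Xs" "\<forall>X\<in>K. pdist N d X Xs < r"
    for K
  proof (rule tendsto_SUP_zero_if_eventually_uniform[OF _ pdist_nonneg])
    have "Xs \<in> profiles N d" using interior by (auto simp: relint_profiles_def)
    then show "K \<noteq> {}" using K(3) unfolding pnhd_def by force
    have K_profiles: "K \<subseteq> profiles N d" using K(1) by (auto simp: relint_profiles_def)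
    moreover have "K \<subseteq> Ua \<inter> consistency_domain N d Xs"
      using K(1,4) K_profiles r(2) relint_profiles_subset_consistency_domain[OF interior] by blast
    ultimately show "\<exists>T. \<forall>t\<ge>T. \<forall>X\<in>K. pdist N d (\<Phi> t X) Xs < e" if "e > 0" for e
      using ftql_flow_uniform_convergence_on_pcompact[OF flow lyap K(2)] Ua(2) that by blast
  qed
  with r(1) show ?thesis by blast
qed

end
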